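(* Let $(R,\mathfrak m,k)$ be a commutative noetherian local ring with $\mathfrak m^4=0$ and $H_R(-1)=0$. For $a,b\in\mathfrak m\smallsetminus\mathfrak m^2$ the following are equivalent: (1) $a,b$ form an exact pair of zero divisors; (2) $(0:_R a)=bR$; (3) $ab=0$, $a\mathfrak m^2=\mathfrak m^3=b\mathfrak m^2$, and $\mu(a\mathfrak m)=\mu(\mathfrak m)-1=\mu(b\mathfrak m)$.
   Context: For a local ring $(R,\mathfrak m,k)$, the Hilbert series is $H_R(t)=\sum_{n\ge0}\operatorname{rank}_k(\mathfrak m^n/\mathfrak m^{n+1})t^n$. $\mu(N)$ denotes the minimal number of generators of a finitely generated $R$-module $N$. Elements $a,b$ form an exact pair of zero divisors if $a,b$ are nonzero non-units with $(0:_R a)=bR$ and $(0:_R b)=aR$. *)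

theory Defs
  imports Main
begin

definition is_ideal :: "'a::comm_ring_1 set \<Rightarrow> bool" where
  "is_ideal I \<longleftrightarrow> 0 \<in> I \<and> (\<forall>x\<in>I. \<forall>y\<in>I. x + y \<in> I) \<and> (\<forall>r. \<forall>x\<in>I. r * x \<in> I)"

definition ideal_span :: "'a::comm_ring_1 set \<Rightarrow> 'a set" where
  "ideal_span S = {x. \<exists>F r. finite F \<and> F \<subseteq> S \<and> x = (\<Sum>s\<in>F. r s * s)}"

definition maximal_ideal :: "'a::comm_ring_1 set \<Rightarrow> bool" where
  "maximal_ideal M \<longleftrightarrow> is_ideal M \<and> M \<noteq> UNIV \<and>
     (\<forall>J. is_ideal J \<and> M \<subseteq> J \<longrightarrow> J = M \<or> J = UNIV)"

definition noetherian_ring :: "'a::comm_ring_1 itself \<Rightarrow> bool" where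
  "noetherian_ring _ \<longleftrightarrow> (\<forall>I::'a set. is_ideal I \<longrightarrow>
     (\<exists>F. finite F \<and> F \<subseteq> I \<and> I = ideal_span F))"

definition local_ring :: "'a::comm_ring_1 itself \<Rightarrow> bool" where
  "local_ring _ \<longleftrightarrow> (\<exists>!M::'a set. maximal_ideal M)"

definition max_ideal :: "'a::comm_ring_1 set" where
  "max_ideal = (THE M. maximal_ideal M)"

definition ideal_prod :: "'a::comm_ring_1 set \<Rightarrow> 'a set \<Rightarrow> 'a set" where
  "ideal_prod I J = ideal_span {x * y | x y. x \<in> I \<and> y \<in> J}"

fun ideal_pow :: "'a::comm_ring_1 set \<Rightarrow> nat \<Rightarrow> 'a set" where
  "ideal_pow I 0 = UNIV"
| "ideal_pow I (Suc n) = ideal_prod I (ideal_pow I n)"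

definition mu :: "'a::comm_ring_1 set \<Rightarrow> nat" where
  "mu I = (LEAST d. \<exists>F. finite F \<and> card F = d \<and> F \<subseteq> I \<and> ideal_span F = I)"

text \<open>rank_k (m^n / m^(n+1)): least size of a subset of m^n whose images span
  m^n/m^(n+1) over k = R/m (equivalently over R, as m acts trivially).\<close>
definition hilb :: "'a::comm_ring_1 itself \<Rightarrow> nat \<Rightarrow> nat" where
  "hilb _ n = (LEAST d. \<exists>F::'a set. finite F \<and> card F = d \<and> F \<subseteq> ideal_pow max_ideal n \<and>
      ideal_pow max_ideal n \<subseteq> {x + y | x y. x \<in> ideal_span F \<and> y \<in> ideal_pow max_ideal (Suc n)})"

definition annih :: "'a::comm_ring_1 \<Rightarrow> 'a set" where
  "annih a = {x. x * a = 0}"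

definition exact_pair :: "'a::comm_ring_1 \<Rightarrow> 'a \<Rightarrow> bool" where
  "exact_pair a b \<longleftrightarrow> a \<noteq> 0 \<and> b \<noteq> 0 \<and> \<not> a dvd 1 \<and> \<not> b dvd 1 \<and>
     annih a = range ((*) b) \<and> annih b = range ((*) a)"

end

theory Submission
  imports Defs
begin

text \<open>
  A Noetherian local ring whose maximal ideal m is nilpotent has finite length \<lambda>, and \<lambda>(R) is the
  sum of its Hilbert function. For x \<in> m - m^2, multiplication by x gives \<lambda>(R) = \<lambda>(0 : x) + \<lambda>(xR),
  and the filtration xR \<supseteq> xm \<supseteq> xm^2 \<subseteq> m^3 gives \<lambda>(xR) + \<lambda>(m^3 / xm^2) = 1 + \<mu>(xm) + \<lambda>(m^3).
  If x kills some y \<in> m - m^2, then \<mu>(xm) \<le> \<mu>(m) - 1, so \<lambda>(xR) \<le> \<mu>(m) + \<lambda>(m^3), with equality iff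
  xm^2 = m^3 and \<mu>(xm) = \<mu>(m) - 1. When m^4 = 0 and H_R(-1) = 0 one has \<lambda>(R) = 2 (\<mu>(m) + \<lambda>(m^3)),
  so for ab = 0 the inclusion bR \<subseteq> (0 : a) is an equality iff both bounds are attained; and
  (0 : a) = bR forces (0 : b) = aR by the same length count.
\<close>

section \<open>Ideals, spans, sums and products\<close>

lemma ideal_0: "is_ideal I \<Longrightarrow> 0 \<in> I"
  by (simp add: is_ideal_def)

lemma ideal_add: "is_ideal I \<Longrightarrow> x \<in> I \<Longrightarrow> y \<in> I \<Longrightarrow> x + y \<in> I"
  by (simp add: is_ideal_def)

lemma ideal_mult_left: "is_ideal I \<Longrightarrow> x \<in> I \<Longrightarrow> r * x \<in> I"
  by (simp add: is_ideal_def)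

lemma ideal_mult_right: "is_ideal I \<Longrightarrow> x \<in> I \<Longrightarrow> x * r \<in> I"
  by (metis ideal_mult_left mult.commute)

lemma ideal_diff: "is_ideal I \<Longrightarrow> x \<in> I \<Longrightarrow> y \<in> I \<Longrightarrow> x - y \<in> I"
  using ideal_add[of I x "- y"] ideal_mult_left[of I y "- 1"] by simp

lemma ideal_sum:
  assumes "is_ideal I" "finite F" "\<And>s. s \<in> F \<Longrightarrow> f s \<in> I"
  shows "sum f F \<in> I"
  using assms(2,3) by (induction F rule: finite_induct) (auto simp: ideal_0 ideal_add assms(1))

lemma is_ideal_UNIV: "is_ideal UNIV"
  by (simp add: is_ideal_def)

lemma is_ideal_zero: "is_ideal {0}"
  by (simp add: is_ideal_def)

lemma is_ideal_Int: "is_ideal A \<Longrightarrow> is_ideal B \<Longrightarrow> is_ideal (A \<inter> B)"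
  by (simp add: is_ideal_def)

lemma is_ideal_image_mult: "is_ideal X \<Longrightarrow> is_ideal ((*) a ` X)"
  unfolding is_ideal_def image_def
  by (auto simp flip: distrib_left mult.left_commute) (metis mult_zero_right, metis mult.left_commute)

lemma is_ideal_vimage_mult: "is_ideal K \<Longrightarrow> is_ideal {z. a * z \<in> K}"
  unfolding is_ideal_def by (auto simp: distrib_left mult.left_commute)

lemma is_ideal_principal: "is_ideal (range ((*) x))"
  using is_ideal_image_mult[OF is_ideal_UNIV] .

lemma self_in_principal: "(x::'a::comm_ring_1) \<in> range ((*) x)"
  using rangeI[of "(*) x" 1] by simp

lemma is_ideal_annih: "is_ideal (annih a)"
  unfolding is_ideal_def annih_def by (auto simp: distrib_right mult.assoc)

lemma is_ideal_ideal_span: "is_ideal (ideal_span S)"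
  unfolding is_ideal_def
proof (intro conjI ballI allI)
  show "0 \<in> ideal_span S"
    unfolding ideal_span_def by (intro CollectI exI[of _ "{}"]) auto
next
  fix x y assume "x \<in> ideal_span S" "y \<in> ideal_span S"
  then obtain F r G t where F: "finite F" "F \<subseteq> S" "x = (\<Sum>s\<in>F. r s * s)"
    and G: "finite G" "G \<subseteq> S" "y = (\<Sum>s\<in>G. t s * s)"
    unfolding ideal_span_def by blast
  define u where "u s = (if s \<in> F then r s else 0) + (if s \<in> G then t s else 0)" for s
  have "u s * s = (if s \<in> F then r s * s else 0) + (if s \<in> G then t s * s else 0)" for s
    unfolding u_def by (simp add: distrib_right)
  then have "(\<Sum>s\<in>F \<union> G. u s * s)
      = (\<Sum>s\<in>F \<union> G. if s \<in> F then r s * s else 0) + (\<Sum>s\<in>F \<union> G. if s \<in> G then t s * s else 0)"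
    by (simp add: sum.distrib)
  also have "\<dots> = x + y"
    using F G by (simp add: sum.inter_restrict[symmetric] Int_absorb1)
  finally show "x + y \<in> ideal_span S"
    unfolding ideal_span_def using F G by (intro CollectI exI[of _ "F \<union> G"] exI[of _ u]) auto
next
  fix c x assume "x \<in> ideal_span S"
  then obtain F r where F: "finite F" "F \<subseteq> S" "x = (\<Sum>s\<in>F. r s * s)"
    unfolding ideal_span_def by blast
  then have "c * x = (\<Sum>s\<in>F. (c * r s) * s)"
    by (simp add: sum_distrib_left mult.assoc)
  then show "c * x \<in> ideal_span S"
    unfolding ideal_span_def using F by (intro CollectI exI[of _ F] exI[of _ "\<lambda>s. c * r s"]) simp
qed

lemma ideal_span_base: "s \<in> S \<Longrightarrow> s \<in> ideal_span S"
  unfolding ideal_span_def by (intro CollectI exI[of _ "{s}"] exI[of _ "\<lambda>_. 1"]) auto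

lemma ideal_span_least: "is_ideal I \<Longrightarrow> S \<subseteq> I \<Longrightarrow> ideal_span S \<subseteq> I"
  unfolding ideal_span_def by (auto intro!: ideal_sum ideal_mult_left)

lemma ideal_span_mono: "S \<subseteq> T \<Longrightarrow> ideal_span S \<subseteq> ideal_span T"
  by (meson ideal_span_base ideal_span_least is_ideal_ideal_span subset_eq)

lemma ideal_span_empty: "ideal_span {} = {0}"
  using ideal_span_least[OF is_ideal_zero, of "{}"] ideal_0[OF is_ideal_ideal_span] by blast

lemma ideal_span_image_mult: "ideal_span ((*) a ` F) = (*) a ` ideal_span F"
proof
  show "ideal_span ((*) a ` F) \<subseteq> (*) a ` ideal_span F"
    by (intro ideal_span_least is_ideal_image_mult is_ideal_ideal_span) (auto intro: ideal_span_base)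
  have "ideal_span F \<subseteq> {z. a * z \<in> ideal_span ((*) a ` F)}"
    by (intro ideal_span_least is_ideal_vimage_mult is_ideal_ideal_span) (auto intro: ideal_span_base)
  then show "(*) a ` ideal_span F \<subseteq> ideal_span ((*) a ` F)"
    by auto
qed

definition ideal_plus :: "'a::comm_ring_1 set \<Rightarrow> 'a set \<Rightarrow> 'a set" where
  "ideal_plus A B = {x + y | x y. x \<in> A \<and> y \<in> B}"

lemma ideal_plusE:
  assumes "z \<in> ideal_plus A B"
  obtains x y where "x \<in> A" "y \<in> B" "z = x + y"
  using assms unfolding ideal_plus_def by blast

lemma is_ideal_ideal_plus: "is_ideal A \<Longrightarrow> is_ideal B \<Longrightarrow> is_ideal (ideal_plus A B)"
  unfolding is_ideal_def ideal_plus_def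
proof (safe, goal_cases)
  case 1 then show ?case by (metis add_0)
next
  case (2 x y x' y') then show ?case by (metis add.assoc add.left_commute)
next
  case (3 r x y) then show ?case by (metis distrib_left)
qed

lemma ideal_plus_upper1: "is_ideal B \<Longrightarrow> A \<subseteq> ideal_plus A B"
  unfolding ideal_plus_def using ideal_0 by force

lemma ideal_plus_upper2: "is_ideal A \<Longrightarrow> B \<subseteq> ideal_plus A B"
  unfolding ideal_plus_def using ideal_0 by force

lemma ideal_plus_least: "is_ideal C \<Longrightarrow> A \<subseteq> C \<Longrightarrow> B \<subseteq> C \<Longrightarrow> ideal_plus A B \<subseteq> C"
  unfolding ideal_plus_def using ideal_add by blast

lemma ideal_plus_commute: "ideal_plus A B = ideal_plus B A"
  unfolding ideal_plus_def by (auto; metis add.commute)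

lemma ideal_plus_assoc: "ideal_plus (ideal_plus A B) C = ideal_plus A (ideal_plus B C)"
  unfolding ideal_plus_def by (auto simp: add.assoc) (metis, metis add.assoc)

lemma ideal_plus_mono: "A \<subseteq> A' \<Longrightarrow> B \<subseteq> B' \<Longrightarrow> ideal_plus A B \<subseteq> ideal_plus A' B'"
  unfolding ideal_plus_def by blast

lemma ideal_plus_absorb1: "is_ideal A \<Longrightarrow> is_ideal B \<Longrightarrow> B \<subseteq> A \<Longrightarrow> ideal_plus A B = A"
  using ideal_plus_least[of A A B] ideal_plus_upper1[of B A] by blast

lemma ideal_plus_absorb2: "is_ideal A \<Longrightarrow> is_ideal B \<Longrightarrow> A \<subseteq> B \<Longrightarrow> ideal_plus A B = B"
  using ideal_plus_absorb1 ideal_plus_commute by metis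

lemma ideal_plus_zero: "ideal_plus A {0} = A"
  unfolding ideal_plus_def by auto

lemma ideal_span_insert: "ideal_span (insert x F) = ideal_plus (ideal_span F) (range ((*) x))"
proof
  show "ideal_span (insert x F) \<subseteq> ideal_plus (ideal_span F) (range ((*) x))"
    using ideal_plus_upper1[OF is_ideal_principal, of "ideal_span F" x]
      ideal_plus_upper2[OF is_ideal_ideal_span, of "range ((*) x)" F] self_in_principal[of x]
    by (intro ideal_span_least is_ideal_ideal_plus is_ideal_ideal_span is_ideal_principal)
       (auto intro: ideal_span_base)
  have "range ((*) x) \<subseteq> ideal_span (insert x F)"
    using ideal_mult_right[OF is_ideal_ideal_span ideal_span_base] by blast
  then show "ideal_plus (ideal_span F) (range ((*) x)) \<subseteq> ideal_span (insert x F)"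
    by (intro ideal_plus_least is_ideal_ideal_span ideal_span_mono) auto
qed

lemma is_ideal_ideal_prod: "is_ideal (ideal_prod I J)"
  unfolding ideal_prod_def by (rule is_ideal_ideal_span)

lemma ideal_prod_mem: "x \<in> I \<Longrightarrow> y \<in> J \<Longrightarrow> x * y \<in> ideal_prod I J"
  unfolding ideal_prod_def by (rule ideal_span_base) blast

lemma ideal_prod_least:
  "is_ideal K \<Longrightarrow> (\<And>x y. x \<in> I \<Longrightarrow> y \<in> J \<Longrightarrow> x * y \<in> K) \<Longrightarrow> ideal_prod I J \<subseteq> K"
  unfolding ideal_prod_def by (rule ideal_span_least) auto

lemma ideal_prod_mono: "I \<subseteq> I' \<Longrightarrow> J \<subseteq> J' \<Longrightarrow> ideal_prod I J \<subseteq> ideal_prod I' J'"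
  by (meson ideal_prod_least ideal_prod_mem is_ideal_ideal_prod subsetD)

lemma ideal_prod_subset_right: "is_ideal J \<Longrightarrow> ideal_prod I J \<subseteq> J"
  by (simp add: ideal_mult_left ideal_prod_least)

lemma ideal_prod_UNIV: "is_ideal I \<Longrightarrow> ideal_prod I UNIV = I"
  using ideal_prod_least[of I I UNIV] ideal_prod_mem[of _ I 1 UNIV] ideal_mult_right[of I]
  by (metis mult_1_right subsetI subset_antisym UNIV_I)

lemma ideal_prod_image_mult: "ideal_prod I ((*) a ` X) = (*) a ` ideal_prod I X"
proof
  show "ideal_prod I ((*) a ` X) \<subseteq> (*) a ` ideal_prod I X"
  proof (rule ideal_prod_least[OF is_ideal_image_mult[OF is_ideal_ideal_prod]])
    fix x y assume "x \<in> I" "y \<in> (*) a ` X"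
    then obtain u where "u \<in> X" "x * y = a * (x * u)"
      by (auto simp: mult.left_commute)
    then show "x * y \<in> (*) a ` ideal_prod I X"
      using \<open>x \<in> I\<close> ideal_prod_mem by blast
  qed
  have "ideal_prod I X \<subseteq> {z. a * z \<in> ideal_prod I ((*) a ` X)}"
  proof (rule ideal_prod_least[OF is_ideal_vimage_mult[OF is_ideal_ideal_prod]])
    fix x y assume "x \<in> I" "y \<in> X"
    then have "x * (a * y) \<in> ideal_prod I ((*) a ` X)"
      by (intro ideal_prod_mem) auto
    then show "x * y \<in> {z. a * z \<in> ideal_prod I ((*) a ` X)}"
      by (simp add: mult.left_commute)
  qed
  then show "(*) a ` ideal_prod I X \<subseteq> ideal_prod I ((*) a ` X)"
    by auto
qed

lemma ideal_prod_ideal_plus_subset: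
  assumes "is_ideal S"
  shows "ideal_prod I (ideal_plus S X) \<subseteq> ideal_plus S (ideal_prod I X)"
proof (rule ideal_prod_least[OF is_ideal_ideal_plus[OF assms is_ideal_ideal_prod]])
  fix x y assume "x \<in> I" "y \<in> ideal_plus S X"
  then obtain s z where "y = s + z" "s \<in> S" "z \<in> X"
    by (blast elim: ideal_plusE)
  then have "x * y = x * s + x * z" "x * s \<in> S" "x * z \<in> ideal_prod I X"
    using assms \<open>x \<in> I\<close> by (auto simp: distrib_left ideal_mult_left ideal_prod_mem)
  then show "x * y \<in> ideal_plus S (ideal_prod I X)"
    unfolding ideal_plus_def by blast
qed

lemma is_ideal_ideal_pow: "is_ideal I \<Longrightarrow> is_ideal (ideal_pow I n)"
  by (cases n) (auto simp: is_ideal_UNIV is_ideal_ideal_prod)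

lemma ideal_pow_Suc_subset: "ideal_pow I (Suc n) \<subseteq> ideal_pow I n"
proof (induction n)
  case (Suc n)
  then show ?case
    using ideal_prod_mono[OF order_refl Suc] by simp
qed simp

lemma ideal_pow_1: "is_ideal I \<Longrightarrow> ideal_pow I 1 = I"
  by (simp add: ideal_prod_UNIV)

lemma power_in_ideal_pow: "x \<in> I \<Longrightarrow> x ^ n \<in> ideal_pow I n"
  by (induction n) (auto intro: ideal_prod_mem)

lemma nakayama_nilpotent:
  assumes M: "ideal_pow M k = {0}" and N: "is_ideal N" and S: "is_ideal S" "S \<subseteq> N"
    and N_sub: "N \<subseteq> ideal_plus S (ideal_prod M N)"
  shows "N = S"
proof -
  have "N \<subseteq> ideal_plus S ((ideal_prod M ^^ j) N) \<and> (ideal_prod M ^^ j) N \<subseteq> ideal_pow M j" for j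
  proof (induction j)
    case 0
    show ?case using ideal_plus_upper2[OF S(1)] by simp
  next
    case (Suc j)
    let ?P = "(ideal_prod M ^^ j) N"
    have "N \<subseteq> ideal_plus S (ideal_prod M N)"
      by (fact N_sub)
    also have "\<dots> \<subseteq> ideal_plus S (ideal_prod M (ideal_plus S ?P))"
      using Suc by (intro ideal_plus_mono ideal_prod_mono) auto
    also have "\<dots> \<subseteq> ideal_plus S (ideal_plus S (ideal_prod M ?P))"
      by (intro ideal_plus_mono ideal_prod_ideal_plus_subset S order_refl)
    also have "\<dots> = ideal_plus S (ideal_prod M ?P)"
      unfolding ideal_plus_assoc[symmetric] ideal_plus_absorb1[OF S(1) S(1) order_refl] ..
    finally have "N \<subseteq> ideal_plus S ((ideal_prod M ^^ Suc j) N)"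
      by simp
    moreover have "(ideal_prod M ^^ Suc j) N \<subseteq> ideal_pow M (Suc j)"
      using ideal_prod_mono[OF order_refl conjunct2[OF Suc]] by simp
    ultimately show ?case ..
  qed
  from this[of k] have "N \<subseteq> ideal_plus S {0}"
    using M ideal_plus_mono[OF order_refl] by blast
  then show ?thesis
    using S(2) ideal_plus_zero by blast
qed

section \<open>Composition series and length\<close>

definition covers :: "'a::comm_ring_1 set \<Rightarrow> 'a set \<Rightarrow> bool" where
  "covers J I \<longleftrightarrow> is_ideal J \<and> is_ideal I \<and> J \<subset> I \<and>
     (\<forall>K. is_ideal K \<and> J \<subseteq> K \<and> K \<subseteq> I \<longrightarrow> K = J \<or> K = I)"

inductive comp_series :: "'a::comm_ring_1 set \<Rightarrow> 'a set \<Rightarrow> nat \<Rightarrow> bool" where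
  comp_series_refl: "is_ideal J \<Longrightarrow> comp_series J J 0"
| comp_series_step: "comp_series J K n \<Longrightarrow> covers K I \<Longrightarrow> comp_series J I (Suc n)"

inductive ideal_chain :: "'a::comm_ring_1 set \<Rightarrow> 'a set \<Rightarrow> nat \<Rightarrow> bool" where
  ideal_chain_refl: "is_ideal J \<Longrightarrow> ideal_chain J J 0"
| ideal_chain_weak: "ideal_chain J K n \<Longrightarrow> is_ideal I \<Longrightarrow> K \<subseteq> I \<Longrightarrow> ideal_chain J I n"
| ideal_chain_strict: "ideal_chain J K n \<Longrightarrow> is_ideal I \<Longrightarrow> K \<subset> I \<Longrightarrow> ideal_chain J I (Suc n)"

lemma ideal_chainD: "ideal_chain J I n \<Longrightarrow> J \<subseteq> I \<and> is_ideal J \<and> is_ideal I \<and> (n > 0 \<longrightarrow> J \<noteq> I)"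
  by (induction rule: ideal_chain.induct) auto

lemma comp_seriesD: "comp_series J I n \<Longrightarrow> J \<subseteq> I \<and> is_ideal J \<and> is_ideal I"
  by (induction rule: comp_series.induct) (auto simp: covers_def)

lemma comp_series_imp_ideal_chain: "comp_series J I n \<Longrightarrow> ideal_chain J I n"
  by (induction rule: comp_series.induct) (auto simp: covers_def intro: ideal_chain.intros)

lemma ideal_chain_trans: "ideal_chain K I p \<Longrightarrow> ideal_chain J K n \<Longrightarrow> ideal_chain J I (n + p)"
  by (induction rule: ideal_chain.induct) (auto intro: ideal_chain.intros)

lemma ideal_chain_strict_step: "is_ideal J \<Longrightarrow> is_ideal I \<Longrightarrow> J \<subset> I \<Longrightarrow> ideal_chain J I 1"
  using ideal_chain_strict[OF ideal_chain_refl] by simp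

lemma comp_series_trans: "comp_series K I p \<Longrightarrow> comp_series J K n \<Longrightarrow> comp_series J I (n + p)"
  by (induction rule: comp_series.induct) (auto intro: comp_series.intros)

lemma covers_imp_comp_series: "covers J I \<Longrightarrow> comp_series J I 1"
  using comp_series_step[OF comp_series_refl] by (auto simp: covers_def)

lemma comp_series_0_eq: "comp_series J I 0 \<Longrightarrow> J = I"
  by (erule comp_series.cases) auto

text \<open>Modularity of the lattice of ideals.\<close>

lemma psubset_Int_or_ideal_plus:
  assumes K: "is_ideal K" and I: "is_ideal I" and C: "is_ideal C" and KI: "K \<subset> I"
  shows "K \<inter> C \<subset> I \<inter> C \<or> ideal_plus K C \<subset> ideal_plus I C"
proof (rule ccontr)
  assume "\<not> ?thesis"
  moreover have "K \<inter> C \<subseteq> I \<inter> C" "ideal_plus K C \<subseteq> ideal_plus I C"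
    using KI ideal_plus_mono[of K I C C] by auto
  ultimately have Int_eq: "K \<inter> C = I \<inter> C" and plus_eq: "ideal_plus K C = ideal_plus I C"
    by auto
  have "I \<subseteq> K"
  proof
    fix x assume x: "x \<in> I"
    then have "x \<in> ideal_plus K C"
      using plus_eq ideal_plus_upper1[OF C] by auto
    then obtain k c where k: "k \<in> K" "c \<in> C" "x = k + c"
      by (rule ideal_plusE)
    then have "c \<in> I"
      using ideal_diff[OF I x, of k] KI by auto
    then have "c \<in> K"
      using Int_eq k by auto
    then show "x \<in> K"
      using k ideal_add[OF K] by auto
  qed
  then show False
    using KI by auto
qed

lemma ideal_chain_split:
  assumes "ideal_chain J I m" "is_ideal C"
  shows "\<exists>p q. m \<le> p + q \<and> ideal_chain (J \<inter> C) (I \<inter> C) p \<and>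
                ideal_chain (ideal_plus J C) (ideal_plus I C) q"
  using assms(1)
proof (induction rule: ideal_chain.induct)
  case (ideal_chain_refl J)
  then show ?case
    using assms(2) by (auto intro!: ideal_chain.ideal_chain_refl is_ideal_Int is_ideal_ideal_plus)
next
  case (ideal_chain_weak J K n I)
  then obtain p q where pq: "n \<le> p + q" "ideal_chain (J \<inter> C) (K \<inter> C) p"
      "ideal_chain (ideal_plus J C) (ideal_plus K C) q"
    by blast
  have "ideal_chain (J \<inter> C) (I \<inter> C) p"
    using ideal_chain.ideal_chain_weak[OF pq(2) is_ideal_Int[OF ideal_chain_weak(2) assms(2)]]
      ideal_chain_weak(3) by auto
  moreover have "ideal_chain (ideal_plus J C) (ideal_plus I C) q"
    using ideal_chain.ideal_chain_weak[OF pq(3) is_ideal_ideal_plus[OF ideal_chain_weak(2) assms(2)]]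
      ideal_plus_mono[OF ideal_chain_weak(3) order_refl] by auto
  ultimately show ?case
    using pq(1) by blast
next
  case (ideal_chain_strict J K n I)
  then obtain p q where pq: "n \<le> p + q" "ideal_chain (J \<inter> C) (K \<inter> C) p"
      "ideal_chain (ideal_plus J C) (ideal_plus K C) q"
    by blast
  have K: "is_ideal K"
    using ideal_chainD[OF ideal_chain_strict(1)] by auto
  have IC: "is_ideal (I \<inter> C)" "is_ideal (ideal_plus I C)"
    using ideal_chain_strict(2) assms(2) by (auto intro: is_ideal_Int is_ideal_ideal_plus)
  have weak: "ideal_chain (J \<inter> C) (I \<inter> C) p" "ideal_chain (ideal_plus J C) (ideal_plus I C) q"
    using ideal_chain_weak[OF pq(2) IC(1)] ideal_chain_weak[OF pq(3) IC(2)]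
      ideal_chain_strict(3) ideal_plus_mono[of K I C C] by auto
  from psubset_Int_or_ideal_plus[OF K ideal_chain_strict(2) assms(2) ideal_chain_strict(3)]
  show ?case
  proof
    assume "K \<inter> C \<subset> I \<inter> C"
    with pq weak IC show ?thesis
      by (intro exI[of _ "Suc p"] exI[of _ q]) (auto intro: ideal_chain.ideal_chain_strict)
  next
    assume "ideal_plus K C \<subset> ideal_plus I C"
    with pq weak IC show ?thesis
      by (intro exI[of _ p] exI[of _ "Suc q"]) (auto intro: ideal_chain.ideal_chain_strict)
  qed
qed

lemma ideal_chain_below_covers:
  "ideal_chain J X q \<Longrightarrow> covers J I \<Longrightarrow> X \<subseteq> I \<Longrightarrow> q \<le> 1 \<and> (q = 1 \<longrightarrow> X = I)"
proof (induction rule: ideal_chain.induct)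
  case (ideal_chain_strict J K n X)
  have "J \<subseteq> K" "is_ideal K" "K \<subseteq> I" "K \<noteq> I"
    using ideal_chainD[OF ideal_chain_strict(1)] ideal_chain_strict(3,6) by auto
  then have "K = J" "n = 0"
    using ideal_chain_strict.IH ideal_chain_strict(5,6) unfolding covers_def by auto
  moreover have "X = I"
    using ideal_chain_strict(2,3,5,6) \<open>K = J\<close> unfolding covers_def by blast
  ultimately show ?case
    by auto
qed auto

text \<open>Jordan--Dedekind: split the chain along the last step \<open>K \<subset> I\<close> of the series by intersecting
  with and adding \<open>K\<close>.\<close>

lemma ideal_chain_le_comp_series: "comp_series J I n \<Longrightarrow> ideal_chain J I m \<Longrightarrow> m \<le> n"
proof (induction arbitrary: m rule: comp_series.induct)
  case (comp_series_refl J)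
  then show ?case
    using ideal_chainD by blast
next
  case (comp_series_step J K n I)
  have JK: "J \<subseteq> K" "is_ideal J" "is_ideal K"
    using comp_seriesD[OF comp_series_step(1)] by auto
  have KI: "K \<subseteq> I" "is_ideal I"
    using comp_series_step(2) by (auto simp: covers_def)
  obtain p q where pq: "m \<le> p + q" "ideal_chain (J \<inter> K) (I \<inter> K) p"
      "ideal_chain (ideal_plus J K) (ideal_plus I K) q"
    using ideal_chain_split[OF comp_series_step(4) JK(3)] by blast
  have "J \<inter> K = J" "I \<inter> K = K" "ideal_plus J K = K" "ideal_plus I K = I"
    using JK KI ideal_plus_absorb1[of I K] ideal_plus_absorb2[of J K] by auto
  then have "p \<le> n" "q \<le> 1"
    using pq comp_series_step.IH ideal_chain_below_covers[OF _ comp_series_step(2)] by auto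
  then show ?case
    using pq(1) by simp
qed

lemma comp_series_unique: "comp_series J I n \<Longrightarrow> comp_series J I n' \<Longrightarrow> n = n'"
  using ideal_chain_le_comp_series comp_series_imp_ideal_chain le_antisym by blast

text \<open>Among the ideals strictly between \<open>X\<close> and \<open>I\<close>, one whose composition series up to \<open>I\<close>
  is longest must cover \<open>X\<close>.\<close>

lemma comp_series_if_comp_series_above:
  assumes X: "is_ideal X" "is_ideal I" "X \<subset> I"
    and above: "\<And>Y. is_ideal Y \<Longrightarrow> X \<subset> Y \<Longrightarrow> Y \<subseteq> I \<Longrightarrow> \<exists>q. comp_series Y I q"
    and bounded: "\<And>Y q. is_ideal Y \<Longrightarrow> X \<subset> Y \<Longrightarrow> Y \<subseteq> I \<Longrightarrow> comp_series Y I q \<Longrightarrow> q \<le> d"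
  shows "\<exists>n. comp_series X I n"
proof -
  define S where "S = {q. \<exists>Y. is_ideal Y \<and> X \<subset> Y \<and> Y \<subseteq> I \<and> comp_series Y I q}"
  have "finite S"
    using bounded by (intro finite_subset[of S "{..d}"]) (auto simp: S_def)
  moreover have "S \<noteq> {}"
    using above[OF X(2,3) order_refl] X(2,3) unfolding S_def by blast
  ultimately have "Max S \<in> S"
    by (rule Max_in)
  then obtain Y0 where Y0: "is_ideal Y0" "X \<subset> Y0" "Y0 \<subseteq> I" "comp_series Y0 I (Max S)"
    unfolding S_def by auto
  have "covers X Y0"
    unfolding covers_def
  proof (intro conjI allI impI)
    fix Z assume Z: "is_ideal Z \<and> X \<subseteq> Z \<and> Z \<subseteq> Y0"
    show "Z = X \<or> Z = Y0"
    proof (rule ccontr)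
      assume "\<not> (Z = X \<or> Z = Y0)"
      then have "X \<subset> Z" "Z \<subset> Y0"
        using Z by auto
      then obtain q where q: "comp_series Z I q"
        using above Z Y0 by blast
      then have "q \<in> S"
        unfolding S_def using Z Y0 \<open>X \<subset> Z\<close> by blast
      have "ideal_chain Z I (Suc (Max S))"
        using ideal_chain_trans[OF comp_series_imp_ideal_chain[OF Y0(4)]
            ideal_chain_strict_step[OF _ Y0(1) \<open>Z \<subset> Y0\<close>]] Z by simp
      then have "Suc (Max S) \<le> q"
        by (rule ideal_chain_le_comp_series[OF q])
      moreover have "q \<le> Max S"
        using \<open>finite S\<close> \<open>q \<in> S\<close> by simp
      ultimately show False
        by simp
    qed
  qed (use X Y0 in auto)
  then show ?thesis
    using comp_series_trans[OF Y0(4) covers_imp_comp_series] by blast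
qed

lemma comp_series_if_ideal_chain_bounded:
  assumes "is_ideal X" "is_ideal I" "X \<subseteq> I" "\<And>m. ideal_chain X I m \<Longrightarrow> m \<le> d"
  shows "\<exists>n. comp_series X I n"
  using assms
proof (induction d arbitrary: X)
  case 0
  then have "X = I"
    using ideal_chain_strict_step[of X I] by fastforce
  then show ?case
    using comp_series_refl[OF \<open>is_ideal I\<close>] by blast
next
  case (Suc d X)
  have chain_via: "ideal_chain X I (Suc m)" if "is_ideal Y" "X \<subset> Y" "ideal_chain Y I m" for Y m
    using ideal_chain_trans[OF that(3) ideal_chain_strict_step[OF Suc.prems(1) that(1,2)]] by simp
  show ?case
  proof (cases "X = I")
    case True
    then show ?thesis
      using comp_series_refl[OF \<open>is_ideal I\<close>] by blast
  next
    case False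
    show ?thesis
    proof (rule comp_series_if_comp_series_above)
      show "X \<subset> I"
        using False Suc.prems(3) by simp
      show "\<exists>q. comp_series Y I q" if "is_ideal Y" "X \<subset> Y" "Y \<subseteq> I" for Y
        using Suc.IH[OF that(1) Suc.prems(2) that(3)] Suc.prems(4) chain_via[OF that(1,2)]
        by fastforce
      show "q \<le> d" if "is_ideal Y" "X \<subset> Y" "Y \<subseteq> I" "comp_series Y I q" for Y q
        using Suc.prems(4)[OF chain_via[OF that(1,2) comp_series_imp_ideal_chain[OF that(4)]]]
        by simp
    qed (rule Suc.prems)+
  qed
qed

definition ideal_length :: "'a::comm_ring_1 set \<Rightarrow> 'a set \<Rightarrow> nat" where
  "ideal_length J I = (THE n. comp_series J I n)"

lemma ideal_length_eq: "comp_series J I n \<Longrightarrow> ideal_length J I = n"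
  unfolding ideal_length_def using comp_series_unique by blast

lemma ideal_length_refl: "is_ideal I \<Longrightarrow> ideal_length I I = 0"
  by (rule ideal_length_eq[OF comp_series_refl])

lemma covers_image_mult:
  assumes cov: "covers J I" and ann: "annih x \<subseteq> J"
  shows "covers ((*) x ` J) ((*) x ` I)"
proof -
  have J: "is_ideal J" and I: "is_ideal I" and JI: "J \<subset> I"
    and between: "\<And>K. is_ideal K \<Longrightarrow> J \<subseteq> K \<Longrightarrow> K \<subseteq> I \<Longrightarrow> K = J \<or> K = I"
    using cov unfolding covers_def by auto
  have inj: "y \<in> J" if xy: "x * y \<in> (*) x ` J" for y
  proof -
    obtain z where z: "z \<in> J" "x * y = x * z"
      using xy by blast
    then have "y - z \<in> annih x"
      by (simp add: annih_def algebra_simps)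
    then show "y \<in> J"
      using ideal_add[OF J _ z(1), of "y - z"] ann by auto
  qed
  show ?thesis
    unfolding covers_def
  proof (intro conjI allI impI)
    show "is_ideal ((*) x ` J)" "is_ideal ((*) x ` I)"
      using J I is_ideal_image_mult by auto
    obtain y where "y \<in> I" "y \<notin> J"
      using JI by auto
    then have "x * y \<notin> (*) x ` J"
      using inj by blast
    then show "(*) x ` J \<subset> (*) x ` I"
      using JI \<open>y \<in> I\<close> by blast
    fix K assume K: "is_ideal K \<and> (*) x ` J \<subseteq> K \<and> K \<subseteq> (*) x ` I"
    let ?K' = "{z. x * z \<in> K} \<inter> I"
    have "is_ideal ?K'"
      using K I by (blast intro: is_ideal_vimage_mult is_ideal_Int)
    moreover have "J \<subseteq> ?K'"
      using K JI by auto
    ultimately have "?K' = J \<or> ?K' = I"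
      using between Int_lower2 by blast
    moreover have "K = (*) x ` ?K'"
      using K by auto
    ultimately show "K = (*) x ` J \<or> K = (*) x ` I"
      by auto
  qed
qed

lemma comp_series_image_mult:
  "comp_series J I n \<Longrightarrow> annih x \<subseteq> J \<Longrightarrow> comp_series ((*) x ` J) ((*) x ` I) n"
proof (induction rule: comp_series.induct)
  case (comp_series_refl J)
  then show ?case
    using comp_series.comp_series_refl is_ideal_image_mult by blast
next
  case (comp_series_step J K n I)
  then have "annih x \<subseteq> K"
    using comp_seriesD by blast
  then show ?case
    using comp_series_step covers_image_mult comp_series.comp_series_step by blast
qed

lemma comp_series_generators:
  "comp_series J I n \<Longrightarrow> \<exists>F. finite F \<and> card F \<le> n \<and> F \<subseteq> I \<and> I \<subseteq> ideal_plus (ideal_span F) J"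
proof (induction rule: comp_series.induct)
  case (comp_series_refl J)
  then show ?case
    using ideal_plus_upper2[OF is_ideal_ideal_span, of J "{}"] by (intro exI[of _ "{}"]) auto
next
  case (comp_series_step J K n I)
  then obtain F where F: "finite F" "card F \<le> n" "F \<subseteq> K" "K \<subseteq> ideal_plus (ideal_span F) J"
    by auto
  have K: "is_ideal K" "is_ideal I" "K \<subset> I"
    using comp_series_step(2) unfolding covers_def by auto
  obtain x where x: "x \<in> I" "x \<notin> K"
    using K by auto
  let ?Q = "ideal_plus K (range ((*) x))"
  have "is_ideal ?Q" "K \<subseteq> ?Q"
    using K(1) by (simp_all add: is_ideal_ideal_plus is_ideal_principal ideal_plus_upper1)
  moreover have "?Q \<subseteq> I"
    using K x ideal_mult_right by (intro ideal_plus_least) auto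
  moreover have "x \<in> ?Q"
    using ideal_plus_upper2[OF K(1)] self_in_principal[of x] by blast
  ultimately have QI: "?Q = I"
    using comp_series_step(2) x unfolding covers_def by blast
  have "I \<subseteq> ideal_plus (ideal_span (insert x F)) J"
  proof
    fix z assume "z \<in> I"
    then obtain k r where kr: "k \<in> K" "z = k + x * r"
      using QI by (auto elim!: ideal_plusE)
    then obtain s j where sj: "s \<in> ideal_span F" "j \<in> J" "k = s + j"
      by (meson F(4) ideal_plusE subsetD)
    have "s \<in> ideal_span (insert x F)"
      using sj(1) ideal_span_mono[OF subset_insertI] by blast
    moreover have "x * r \<in> ideal_span (insert x F)"
      by (intro ideal_mult_right is_ideal_ideal_span ideal_span_base insertI1)
    ultimately have "s + x * r \<in> ideal_span (insert x F)"
      by (rule ideal_add[OF is_ideal_ideal_span])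
    moreover have "z = (s + x * r) + j"
      using kr sj by (simp add: algebra_simps)
    ultimately show "z \<in> ideal_plus (ideal_span (insert x F)) J"
      unfolding ideal_plus_def using sj by blast
  qed
  moreover have "card (insert x F) \<le> Suc n"
    using F by (simp add: card_insert_if)
  ultimately show ?case
    using F x K by (intro exI[of _ "insert x F"]) auto
qed

section \<open>Noetherian local rings with nilpotent maximal ideal\<close>

text \<open>The parameter \<open>ty\<close> serves only to fix the ring type.\<close>

locale artinian_local =
  fixes ty :: "'a::comm_ring_1 itself" and e :: nat
  assumes noetherian: "noetherian_ring TYPE('a)"
    and is_local: "local_ring TYPE('a)"
    and max_ideal_nilpotent: "ideal_pow (max_ideal :: 'a set) e = {0}"
begin

abbreviation mm :: "'a set" where "mm \<equiv> max_ideal"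

abbreviation mpow :: "nat \<Rightarrow> 'a set" where "mpow n \<equiv> ideal_pow mm n"

lemma maximal_ideal_max_ideal: "maximal_ideal mm"
  using is_local unfolding local_ring_def max_ideal_def by (rule theI')

lemma is_ideal_max_ideal: "is_ideal mm"
  using maximal_ideal_max_ideal unfolding maximal_ideal_def by auto

lemma covers_max_ideal_UNIV: "covers mm UNIV"
  using maximal_ideal_max_ideal is_ideal_UNIV unfolding maximal_ideal_def covers_def by blast

lemma is_ideal_mpow: "is_ideal (mpow n)"
  using is_ideal_ideal_pow[OF is_ideal_max_ideal] .

lemma mpow_1: "mpow 1 = mm"
  using ideal_pow_1[OF is_ideal_max_ideal] .

lemma mpow_2: "mpow 2 = ideal_prod mm mm"
  using ideal_prod_UNIV[OF is_ideal_max_ideal] by (simp add: numeral_2_eq_2)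

lemma mpow_2_subset: "mpow 2 \<subseteq> mm"
  using ideal_pow_Suc_subset[of mm 1] mpow_1 by (simp add: numeral_2_eq_2)

lemma unit_if_notin_max_ideal:
  assumes "r \<notin> mm"
  shows "\<exists>s. s * r = 1"
proof -
  let ?J = "ideal_plus mm (range ((*) r))"
  have "is_ideal ?J" "mm \<subseteq> ?J"
    by (simp_all add: is_ideal_ideal_plus is_ideal_max_ideal is_ideal_principal ideal_plus_upper1)
  moreover have "r \<in> ?J"
    using ideal_plus_upper2[OF is_ideal_max_ideal] self_in_principal[of r] by blast
  ultimately have "?J = UNIV"
    using maximal_ideal_max_ideal assms unfolding maximal_ideal_def by blast
  then obtain x s where x: "x \<in> mm" "1 = x + r * s"
    by (metis UNIV_I ideal_plusE rangeE)
  have "x ^ e = 0"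
    using power_in_ideal_pow[OF x(1)] max_ideal_nilpotent by auto
  txt \<open>\<open>r * s = 1 - x\<close> is inverted by the finite geometric series of the nilpotent \<open>x\<close>.\<close>
  moreover have "r * s = 1 - x"
    using x(2) by (simp add: algebra_simps)
  ultimately have "(r * s) * (\<Sum>i<e. x ^ i) = 1"
    using one_diff_power_eq[of x e] by simp
  then show ?thesis
    by (metis mult.commute mult.left_commute)
qed

lemma not_dvd_one_if_in_max_ideal: "x \<in> mm \<Longrightarrow> \<not> x dvd 1"
  using maximal_ideal_max_ideal ideal_mult_right[OF is_ideal_max_ideal, of x]
  unfolding maximal_ideal_def dvd_def
  by (metis UNIV_eq_I ideal_mult_left[OF is_ideal_max_ideal] mult_1_right)

lemma ideal_subset_max_ideal: "is_ideal J \<Longrightarrow> 1 \<notin> J \<Longrightarrow> J \<subseteq> mm"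
  using unit_if_notin_max_ideal ideal_mult_left by (metis subsetI)

lemma covers_ideal_plus_principal:
  assumes J: "is_ideal J" and x: "x \<notin> J" "\<And>r. r \<in> mm \<Longrightarrow> x * r \<in> J"
  shows "covers J (ideal_plus J (range ((*) x)))"
  unfolding covers_def
proof (intro conjI allI impI)
  let ?I = "ideal_plus J (range ((*) x))"
  show "is_ideal J" "is_ideal ?I"
    by (simp_all add: J is_ideal_ideal_plus is_ideal_principal)
  have "x \<in> ?I"
    using ideal_plus_upper2[OF J] self_in_principal[of x] by blast
  then show "J \<subset> ?I"
    using ideal_plus_upper1[OF is_ideal_principal] x(1) by blast
  fix K assume K: "is_ideal K \<and> J \<subseteq> K \<and> K \<subseteq> ?I"
  show "K = J \<or> K = ?I"
  proof (cases "K = J")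
    case False
    then obtain y where y: "y \<in> K" "y \<notin> J"
      using K by auto
    then obtain j r where jr: "j \<in> J" "y = j + x * r"
      using K by (auto elim!: ideal_plusE)
    have "r \<notin> mm"
      using x(2) jr y ideal_add[OF J] by auto
    then obtain s where "s * r = 1"
      using unit_if_notin_max_ideal by auto
    then have "x = s * (y - j)"
      using jr by (metis add_diff_cancel_left' mult.commute mult.left_commute mult_1_right)
    then have "x \<in> K"
      using K y jr by (metis ideal_diff ideal_mult_left subsetD)
    then have "?I \<subseteq> K"
      using K ideal_mult_right by (intro ideal_plus_least) auto
    then show ?thesis
      using K by auto
  qed simp
qed

lemma comp_series_ideal_plus_span:
  assumes J: "is_ideal J" and F: "finite F" and killed: "\<And>x r. x \<in> F \<Longrightarrow> r \<in> mm \<Longrightarrow> x * r \<in> J"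
  shows "\<exists>n \<le> card F. comp_series J (ideal_plus J (ideal_span F)) n"
  using F killed
proof (induction F rule: finite_induct)
  case empty
  then show ?case
    using comp_series_refl[OF J] by (auto simp: ideal_span_empty ideal_plus_zero)
next
  case (insert x F)
  let ?P = "ideal_plus J (ideal_span F)"
  obtain n where n: "n \<le> card F" "comp_series J ?P n"
    using insert by auto
  have P: "is_ideal ?P"
    by (simp add: J is_ideal_ideal_plus is_ideal_ideal_span)
  have eq: "ideal_plus J (ideal_span (insert x F)) = ideal_plus ?P (range ((*) x))"
    by (simp add: ideal_span_insert ideal_plus_assoc)
  show ?case
  proof (cases "x \<in> ?P")
    case True
    then have "ideal_plus ?P (range ((*) x)) = ?P"
      using P ideal_mult_right by (intro ideal_plus_absorb1 is_ideal_principal) auto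
    then show ?thesis
      using n eq insert(1,2) by (metis card_insert_disjoint le_Suc_eq)
  next
    case False
    have "x * r \<in> ?P" if "r \<in> mm" for r
      using insert.prems that ideal_plus_upper1[OF is_ideal_ideal_span, of J F] by auto
    then have "covers ?P (ideal_plus ?P (range ((*) x)))"
      using covers_ideal_plus_principal[OF P False] by auto
    then have "comp_series J (ideal_plus J (ideal_span (insert x F))) (Suc n)"
      using comp_series_step[OF n(2)] eq by simp
    then show ?thesis
      using n insert(1,2) by (intro exI[of _ "Suc n"]) simp
  qed
qed

lemma ideal_finitely_generated: "is_ideal (I::'a set) \<Longrightarrow> \<exists>F. finite F \<and> F \<subseteq> I \<and> I = ideal_span F"
  using noetherian unfolding noetherian_ring_def by blast

text \<open>When \<open>m\<close> kills \<open>N/J\<close>, the least number of generators of \<open>N\<close> modulo \<open>J\<close> is the length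
  of \<open>N/J\<close>: the \<open>k\<close>-dimension of a \<open>k\<close>-vector space.\<close>

lemma least_generators_eq_ideal_length:
  assumes J: "is_ideal J" and N: "is_ideal N" and JN: "J \<subseteq> N"
    and killed: "\<And>x r. x \<in> N \<Longrightarrow> r \<in> mm \<Longrightarrow> x * r \<in> J"
  shows "(LEAST d. \<exists>F. finite F \<and> card F = d \<and> F \<subseteq> N \<and> N \<subseteq> ideal_plus (ideal_span F) J)
           = ideal_length J N"
    and "comp_series J N (ideal_length J N)"
proof -
  let ?P = "\<lambda>d. \<exists>F. finite F \<and> card F = d \<and> F \<subseteq> N \<and> N \<subseteq> ideal_plus (ideal_span F) J"
  obtain F where "finite F" "F \<subseteq> N" "N = ideal_span F"
    using ideal_finitely_generated[OF N] by auto
  then have "?P (card F)"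
    using ideal_plus_upper1[OF J, of N] by auto
  then have "?P (Least ?P)"
    by (rule LeastI)
  then obtain F0 where F0: "finite F0" "card F0 = Least ?P" "F0 \<subseteq> N"
      "N \<subseteq> ideal_plus (ideal_span F0) J"
    by auto
  obtain n where n: "n \<le> card F0" "comp_series J (ideal_plus J (ideal_span F0)) n"
    using comp_series_ideal_plus_span[OF J F0(1)] killed F0(3) by blast
  have "ideal_plus J (ideal_span F0) = N"
    using F0(4) ideal_plus_commute[of J] ideal_plus_least[OF N JN ideal_span_least[OF N F0(3)]]
    by auto
  with n have series: "comp_series J N n"
    by simp
  obtain G where G: "finite G" "card G \<le> n" "G \<subseteq> N" "N \<subseteq> ideal_plus (ideal_span G) J"
    using comp_series_generators[OF series] by auto
  have "Least ?P \<le> card G"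
    using G by (intro Least_le) auto
  then have "Least ?P = n"
    using n G F0 by auto
  then show "Least ?P = ideal_length J N" "comp_series J N (ideal_length J N)"
    using ideal_length_eq[OF series] series by auto
qed

lemma nakayama:
  "is_ideal N \<Longrightarrow> is_ideal S \<Longrightarrow> S \<subseteq> N \<Longrightarrow> N \<subseteq> ideal_plus S (ideal_prod mm N) \<Longrightarrow> N = S"
  using nakayama_nilpotent[OF max_ideal_nilpotent] by blast

lemma mu_eq_ideal_length:
  assumes N: "is_ideal N"
  shows "mu N = ideal_length (ideal_prod mm N) N"
    and "comp_series (ideal_prod mm N) N (ideal_length (ideal_prod mm N) N)"
proof -
  let ?J = "ideal_prod mm N"
  have J: "is_ideal ?J" "?J \<subseteq> N"
    using is_ideal_ideal_prod ideal_prod_subset_right[OF N] by auto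
  have killed: "x * r \<in> ?J" if "x \<in> N" "r \<in> mm" for x r
    using ideal_prod_mem[OF that(2,1)] by (simp add: mult.commute)
  have "(finite F \<and> card F = d \<and> F \<subseteq> N \<and> ideal_span F = N) \<longleftrightarrow>
        (finite F \<and> card F = d \<and> F \<subseteq> N \<and> N \<subseteq> ideal_plus (ideal_span F) ?J)" for F d
    using nakayama[OF N is_ideal_ideal_span ideal_span_least[OF N]] ideal_plus_upper1[OF J(1), of N]
    by auto
  then have "mu N = (LEAST d. \<exists>F. finite F \<and> card F = d \<and> F \<subseteq> N \<and> N \<subseteq> ideal_plus (ideal_span F) ?J)"
    unfolding mu_def by simp
  then show "mu N = ideal_length ?J N" "comp_series ?J N (ideal_length ?J N)"
    using least_generators_eq_ideal_length[OF J(1) N J(2) killed] by auto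
qed

lemma mu_le_card:
  assumes "is_ideal N" "finite F" "F \<subseteq> N" "N \<subseteq> ideal_plus (ideal_span F) (ideal_prod mm N)"
  shows "mu N \<le> card F"
proof -
  have "ideal_span F = N"
    using nakayama[OF assms(1) is_ideal_ideal_span ideal_span_least[OF assms(1,3)]] assms(4) by simp
  then show ?thesis
    unfolding mu_def using assms(2,3) by (intro Least_le) auto
qed

lemma hilb_eq_ideal_length:
  "hilb TYPE('a) n = ideal_length (mpow (Suc n)) (mpow n)"
  "comp_series (mpow (Suc n)) (mpow n) (hilb TYPE('a) n)"
proof -
  have killed: "x * r \<in> mpow (Suc n)" if "x \<in> mpow n" "r \<in> mm" for x r
    using ideal_prod_mem[OF that(2,1)] by (simp add: mult.commute)
  have "hilb TYPE('a) n = (LEAST d. \<exists>F. finite F \<and> card F = d \<and> F \<subseteq> mpow n \<and>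
                                        mpow n \<subseteq> ideal_plus (ideal_span F) (mpow (Suc n)))"
    unfolding hilb_def ideal_plus_def ..
  then show "hilb TYPE('a) n = ideal_length (mpow (Suc n)) (mpow n)"
    "comp_series (mpow (Suc n)) (mpow n) (hilb TYPE('a) n)"
    using least_generators_eq_ideal_length[OF is_ideal_mpow is_ideal_mpow ideal_pow_Suc_subset killed]
    by auto
qed

lemma comp_series_mpow: "comp_series (mpow (n + k)) (mpow n) (\<Sum>i = n..<n + k. hilb TYPE('a) i)"
proof (induction k)
  case 0
  show ?case
    using comp_series_refl[OF is_ideal_mpow] by simp
next
  case (Suc k)
  show ?case
    using comp_series_trans[OF Suc hilb_eq_ideal_length(2)[of "n + k"]] by (simp add: add.commute)
qed

lemma comp_series_UNIV: "comp_series {0::'a} UNIV (\<Sum>i<e. hilb TYPE('a) i)"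
  using comp_series_mpow[of 0 e] max_ideal_nilpotent by (simp add: atLeast0LessThan)

text \<open>The ring has finite length, so every interval of ideals has a composition series.\<close>

lemma comp_series_ideal_length:
  fixes J I :: "'a set"
  assumes "is_ideal J" "is_ideal I" "J \<subseteq> I"
  shows "comp_series J I (ideal_length J I)"
proof -
  have "m \<le> (\<Sum>i<e. hilb TYPE('a) i)" if "ideal_chain J I m" for m
  proof -
    have bottom: "ideal_chain {0} J 0"
      using ideal_chain_weak[OF ideal_chain_refl[OF is_ideal_zero] assms(1)] ideal_0[OF assms(1)]
      by simp
    have top: "ideal_chain I UNIV 0"
      using ideal_chain_weak[OF ideal_chain_refl[OF assms(2)] is_ideal_UNIV] by simp
    have "ideal_chain {0::'a} UNIV (0 + m + 0)"
      by (rule ideal_chain_trans[OF top ideal_chain_trans[OF that bottom]])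
    then show ?thesis
      using ideal_chain_le_comp_series[OF comp_series_UNIV] by simp
  qed
  then obtain n where n: "comp_series J I n"
    using comp_series_if_ideal_chain_bounded[OF assms] by blast
  then show ?thesis
    using ideal_length_eq[OF n] by simp
qed

lemma ideal_length_add:
  fixes J K I :: "'a set"
  assumes "is_ideal J" "is_ideal K" "is_ideal I" "J \<subseteq> K" "K \<subseteq> I"
  shows "ideal_length J I = ideal_length J K + ideal_length K I"
  by (rule ideal_length_eq, rule comp_series_trans)
     (use assms in \<open>auto intro: comp_series_ideal_length\<close>)

lemma ideal_length_0_imp_eq:
  fixes J I :: "'a set"
  assumes "is_ideal J" "is_ideal I" "J \<subseteq> I" "ideal_length J I = 0"
  shows "J = I"
proof (rule comp_series_0_eq)
  show "comp_series J I 0"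
    using comp_series_ideal_length[OF assms(1-3)] assms(4) by simp
qed

lemma ideal_eq_if_ideal_length_le:
  fixes J I :: "'a set"
  assumes "is_ideal J" "is_ideal I" "J \<subseteq> I" "ideal_length {0} I \<le> ideal_length {0} J"
  shows "J = I"
proof -
  have "{0} \<subseteq> J"
    using ideal_0[OF assms(1)] by simp
  then have "ideal_length {0} I = ideal_length {0} J + ideal_length J I"
    by (rule ideal_length_add[OF is_ideal_zero assms(1,2) _ assms(3)])
  then have "ideal_length J I = 0"
    using assms(4) by linarith
  then show ?thesis
    by (rule ideal_length_0_imp_eq[OF assms(1-3)])
qed

lemma ideal_length_mpow:
  "n \<le> e \<Longrightarrow> ideal_length {0} (mpow n) = (\<Sum>i = n..<e. hilb TYPE('a) i)"
  using comp_series_mpow[of n "e - n"] max_ideal_nilpotent by (simp add: ideal_length_eq)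

lemma ideal_length_UNIV: "ideal_length {0::'a} UNIV = (\<Sum>i<e. hilb TYPE('a) i)"
  using ideal_length_eq[OF comp_series_UNIV] .

lemma hilb_0: "hilb TYPE('a) 0 = 1"
  using hilb_eq_ideal_length(1)[of 0] mpow_1 covers_imp_comp_series[OF covers_max_ideal_UNIV]
  by (simp add: ideal_length_eq)

lemma mu_max_ideal: "mu mm = hilb TYPE('a) 1"
  using mu_eq_ideal_length(1)[OF is_ideal_max_ideal] hilb_eq_ideal_length(1)[of 1] mpow_1 mpow_2
  by (simp add: numeral_2_eq_2)

text \<open>Multiplication by \<open>x\<close> maps \<open>R / (0 : x)\<close> isomorphically onto \<open>xR\<close>.\<close>

lemma ideal_length_UNIV_annih:
  fixes x :: 'a
  shows "ideal_length {0::'a} UNIV = ideal_length {0} (annih x) + ideal_length {0} (range ((*) x))"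
proof -
  have "comp_series ((*) x ` annih x) (range ((*) x)) (ideal_length (annih x) UNIV)"
    using comp_series_ideal_length[OF is_ideal_annih is_ideal_UNIV subset_UNIV]
    by (rule comp_series_image_mult) simp
  moreover have "(*) x ` annih x = {0}"
  proof
    show "(*) x ` annih x \<subseteq> {0}"
      by (auto simp: annih_def mult.commute)
    show "{0} \<subseteq> (*) x ` annih x"
      using ideal_0[OF is_ideal_annih, of x] image_eqI[of 0 "(*) x" 0] by simp
  qed
  ultimately have "ideal_length (annih x) UNIV = ideal_length {0} (range ((*) x))"
    by (simp add: ideal_length_eq)
  then show ?thesis
    using ideal_length_add[OF is_ideal_zero is_ideal_annih is_ideal_UNIV, of x]
      ideal_0[OF is_ideal_annih, of x] by simp
qed

lemma annih_swap:
  fixes a b :: 'a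
  assumes "annih a = range ((*) b)"
  shows "annih b = range ((*) a)"
proof -
  have "b \<in> annih a"
    using assms self_in_principal[of b] by simp
  then have "a * b = 0"
    by (simp add: annih_def mult.commute)
  then have "range ((*) a) \<subseteq> annih b"
    by (auto simp: annih_def mult.commute mult.left_commute)
  moreover have "ideal_length {0} (annih b) \<le> ideal_length {0} (range ((*) a))"
    using ideal_length_UNIV_annih[of a, unfolded assms] ideal_length_UNIV_annih[of b] by linarith
  ultimately show ?thesis
    using ideal_eq_if_ideal_length_le[OF is_ideal_principal is_ideal_annih] by blast
qed

lemma exact_pair_iff_annih_eq:
  assumes "a \<in> mm - {0}" "b \<in> mm - {0}"
  shows "exact_pair a b \<longleftrightarrow> annih a = range ((*) b)"
  using assms annih_swap[of a b] not_dvd_one_if_in_max_ideal[of a] not_dvd_one_if_in_max_ideal[of b]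
  unfolding exact_pair_def by auto

subsection \<open>Lengths of principal ideals\<close>

lemma image_mult_mpow_subset: "x \<in> mm \<Longrightarrow> (*) x ` mpow n \<subseteq> mpow (Suc n)"
  by (auto intro: ideal_prod_mem)

lemma mu_max_ideal_eq_ideal_length: "mu mm = ideal_length (mpow 2) mm"
  using mu_eq_ideal_length(1)[OF is_ideal_max_ideal] mpow_2 by simp

lemma ideal_length_principal:
  fixes x :: 'a
  assumes x: "x \<in> mm" "x \<noteq> 0"
  shows "ideal_length {0} (range ((*) x)) + ideal_length ((*) x ` mpow 2) (mpow 3)
           = 1 + mu ((*) x ` mm) + ideal_length {0} (mpow 3)"
proof -
  let ?xm2 = "(*) x ` mpow 2" and ?xm = "(*) x ` mm"
  have ideals: "is_ideal ?xm2" "is_ideal ?xm"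
    by (simp_all add: is_ideal_image_mult is_ideal_mpow is_ideal_max_ideal)
  have "annih x \<subseteq> mm"
    using x(2) by (intro ideal_subset_max_ideal is_ideal_annih) (simp add: annih_def)
  then have "comp_series ?xm (range ((*) x)) 1"
    using comp_series_image_mult[OF covers_imp_comp_series[OF covers_max_ideal_UNIV]] by blast
  then have top: "ideal_length ?xm (range ((*) x)) = 1"
    by (rule ideal_length_eq)
  have "ideal_prod mm ?xm = ?xm2"
    using ideal_prod_image_mult mpow_2 by simp
  then have middle: "mu ?xm = ideal_length ?xm2 ?xm"
    using mu_eq_ideal_length(1)[OF ideals(2)] by simp
  have "{0} \<subseteq> ?xm2" "?xm2 \<subseteq> ?xm" "?xm \<subseteq> range ((*) x)" "?xm2 \<subseteq> mpow 3"
    using ideal_0[OF ideals(1)] mpow_2_subset image_mult_mpow_subset[OF x(1), of 2]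
    by (auto simp: numeral_3_eq_3 numeral_2_eq_2)
  then have "ideal_length {0} (range ((*) x))
               = ideal_length {0} ?xm2 + ideal_length ?xm2 ?xm + ideal_length ?xm (range ((*) x))"
    and "ideal_length {0} (mpow 3) = ideal_length {0} ?xm2 + ideal_length ?xm2 (mpow 3)"
    using ideal_length_add[OF is_ideal_zero ideals(1) is_ideal_principal]
      ideal_length_add[OF ideals is_ideal_principal]
      ideal_length_add[OF is_ideal_zero ideals(1) is_ideal_mpow]
    by auto
  then show ?thesis
    using top middle by simp
qed

lemma image_mult_max_ideal_subset:
  assumes F: "mm \<subseteq> ideal_plus (ideal_span F) (ideal_plus (mpow 2) (range ((*) y)))"
    and xy: "x * y = 0"
  shows "(*) x ` mm \<subseteq> ideal_plus (ideal_span ((*) x ` F)) (ideal_prod mm ((*) x ` mm))"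
proof
  fix z assume "z \<in> (*) x ` mm"
  then obtain w where w: "w \<in> mm" "z = x * w"
    by blast
  then obtain s p r where spr: "s \<in> ideal_span F" "p \<in> mpow 2" "w = s + (p + y * r)"
    using F by (blast elim: ideal_plusE)
  have "z = x * s + x * p"
    using w spr xy by (simp add: algebra_simps flip: mult.assoc)
  moreover have "x * s \<in> ideal_span ((*) x ` F)"
    using spr(1) ideal_span_image_mult by blast
  moreover have "x * p \<in> ideal_prod mm ((*) x ` mm)"
    using spr(2) mpow_2 ideal_prod_image_mult by blast
  ultimately show "z \<in> ideal_plus (ideal_span ((*) x ` F)) (ideal_prod mm ((*) x ` mm))"
    unfolding ideal_plus_def by blast
qed

text \<open>If \<open>x\<close> kills some \<open>y \<in> m - m\<^sup>2\<close>, then \<open>xm\<close> is generated by the images of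
  generators of \<open>m\<close> modulo \<open>m\<^sup>2 + yR\<close>, one fewer than \<open>\<mu>(m)\<close>.\<close>

lemma mu_image_mult_less:
  fixes x y :: 'a
  assumes y: "y \<in> mm" "y \<notin> mpow 2" and xy: "x * y = 0"
  shows "mu ((*) x ` mm) + 1 \<le> mu mm"
proof -
  let ?B = "ideal_plus (mpow 2) (range ((*) y))"
  have "range ((*) y) \<subseteq> mm"
    using ideal_mult_right[OF is_ideal_max_ideal y(1)] by blast
  then have B: "is_ideal ?B" "mpow 2 \<subseteq> ?B" "?B \<subseteq> mm"
    using mpow_2_subset
    by (simp_all add: is_ideal_ideal_plus is_ideal_mpow is_ideal_principal ideal_plus_upper1
        ideal_plus_least is_ideal_max_ideal)
  have "covers (mpow 2) ?B"
    using y mpow_2 ideal_prod_mem[of y mm] by (intro covers_ideal_plus_principal is_ideal_mpow) auto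
  then have "ideal_length (mpow 2) ?B = 1"
    by (rule ideal_length_eq[OF covers_imp_comp_series])
  then have length_B: "ideal_length ?B mm + 1 = mu mm"
    using ideal_length_add[OF is_ideal_mpow B(1) is_ideal_max_ideal B(2,3)]
      mu_max_ideal_eq_ideal_length by simp
  obtain F where F: "finite F" "card F \<le> ideal_length ?B mm" "F \<subseteq> mm"
      "mm \<subseteq> ideal_plus (ideal_span F) ?B"
    using comp_series_generators[OF comp_series_ideal_length[OF B(1) is_ideal_max_ideal B(3)]]
    by blast
  from F(4) have "(*) x ` mm \<subseteq> ideal_plus (ideal_span ((*) x ` F)) (ideal_prod mm ((*) x ` mm))"
    using xy by (rule image_mult_max_ideal_subset)
  then have "mu ((*) x ` mm) \<le> card ((*) x ` F)"
    using F(1,3) by (intro mu_le_card is_ideal_image_mult is_ideal_max_ideal) auto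
  also have "\<dots> \<le> card F"
    using F(1) by (rule card_image_le)
  finally show ?thesis
    using F(2) length_B by simp
qed

lemma ideal_length_principal_le:
  fixes x y :: 'a
  assumes "x \<in> mm - {0}" "y \<in> mm - mpow 2" "x * y = 0"
  shows "ideal_length {0} (range ((*) x)) \<le> mu mm + ideal_length {0} (mpow 3)"
proof -
  have "mu ((*) x ` mm) + 1 \<le> mu mm"
    using assms(2,3) by (intro mu_image_mult_less) auto
  then show ?thesis
    using ideal_length_principal[of x] assms(1) by simp
qed

lemma ideal_length_principal_eq_iff:
  fixes x y :: 'a
  assumes x: "x \<in> mm - {0}" and "y \<in> mm - mpow 2" "x * y = 0"
  shows "ideal_length {0} (range ((*) x)) = mu mm + ideal_length {0} (mpow 3) \<longleftrightarrow>
           (*) x ` mpow 2 = mpow 3 \<and> mu ((*) x ` mm) + 1 = mu mm"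
proof -
  have sum: "ideal_length {0} (range ((*) x)) + ideal_length ((*) x ` mpow 2) (mpow 3)
               = 1 + mu ((*) x ` mm) + ideal_length {0} (mpow 3)"
    using ideal_length_principal x by simp
  have less: "mu ((*) x ` mm) + 1 \<le> mu mm"
    using assms(2,3) by (intro mu_image_mult_less) auto
  have "(*) x ` mpow 2 \<subseteq> mpow 3"
    using image_mult_mpow_subset[of x 2] x by (simp add: numeral_3_eq_3 numeral_2_eq_2)
  then have "(*) x ` mpow 2 = mpow 3 \<longleftrightarrow> ideal_length ((*) x ` mpow 2) (mpow 3) = 0"
    using ideal_length_refl[OF is_ideal_mpow, of 3]
      ideal_length_0_imp_eq[OF is_ideal_image_mult[OF is_ideal_mpow] is_ideal_mpow]
    by metis
  then show ?thesis
    using sum less by linarith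
qed

text \<open>Under \<open>\<lambda>(R) = 2 (\<mu>(m) + \<lambda>(m\<^sup>3))\<close>, the bound \<open>\<lambda>(aR) + \<lambda>(bR) \<le> \<lambda>(R)\<close> coming from
  \<open>bR \<subseteq> (0 : a)\<close> is attained exactly when both principal ideals have the largest possible length.\<close>

lemma annih_eq_iff_principal_lengths:
  fixes a b :: 'a
  assumes length: "ideal_length {0::'a} UNIV = 2 * (mu mm + ideal_length {0} (mpow 3))"
    and a: "a \<in> mm - mpow 2" and b: "b \<in> mm - mpow 2" and ab: "a * b = 0"
  shows "annih a = range ((*) b) \<longleftrightarrow>
           ideal_length {0} (range ((*) a)) = mu mm + ideal_length {0} (mpow 3) \<and>
           ideal_length {0} (range ((*) b)) = mu mm + ideal_length {0} (mpow 3)"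
proof
  have ba: "b * a = 0"
    using ab by (simp add: mult.commute)
  have nonzero: "a \<in> mm - {0}" "b \<in> mm - {0}"
    using a b ideal_0[OF is_ideal_mpow] by auto
  have "ideal_length {0} (range ((*) a)) \<le> mu mm + ideal_length {0} (mpow 3)"
    and "ideal_length {0} (range ((*) b)) \<le> mu mm + ideal_length {0} (mpow 3)"
    using ideal_length_principal_le[OF nonzero(1) b ab] ideal_length_principal_le[OF nonzero(2) a ba]
    by simp_all
  moreover assume "annih a = range ((*) b)"
  then have "ideal_length {0::'a} UNIV = ideal_length {0} (range ((*) b)) + ideal_length {0} (range ((*) a))"
    using ideal_length_UNIV_annih[of a] by simp
  ultimately show "ideal_length {0} (range ((*) a)) = mu mm + ideal_length {0} (mpow 3) \<and>
      ideal_length {0} (range ((*) b)) = mu mm + ideal_length {0} (mpow 3)"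
    using length by simp
next
  assume "ideal_length {0} (range ((*) a)) = mu mm + ideal_length {0} (mpow 3) \<and>
      ideal_length {0} (range ((*) b)) = mu mm + ideal_length {0} (mpow 3)"
  then have "ideal_length {0} (annih a) \<le> ideal_length {0} (range ((*) b))"
    using ideal_length_UNIV_annih[of a] length by arith
  moreover have "range ((*) b) \<subseteq> annih a"
    using ab by (auto simp: annih_def mult.commute mult.left_commute)
  ultimately show "annih a = range ((*) b)"
    using ideal_eq_if_ideal_length_le[OF is_ideal_principal is_ideal_annih] by blast
qed

lemma annih_eq_principal_iff:
  fixes a b :: 'a
  assumes length: "ideal_length {0::'a} UNIV = 2 * (mu mm + ideal_length {0} (mpow 3))"
    and a: "a \<in> mm - mpow 2" and b: "b \<in> mm - mpow 2"
  shows "annih a = range ((*) b) \<longleftrightarrow>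
           a * b = 0 \<and> (*) a ` mpow 2 = mpow 3 \<and> (*) b ` mpow 2 = mpow 3 \<and>
           mu ((*) a ` mm) + 1 = mu mm \<and> mu ((*) b ` mm) + 1 = mu mm"
proof (cases "a * b = 0")
  case True
  then have "b * a = 0"
    by (simp add: mult.commute)
  moreover have "a \<in> mm - {0}" "b \<in> mm - {0}"
    using a b ideal_0[OF is_ideal_mpow] by auto
  ultimately show ?thesis
    using True annih_eq_iff_principal_lengths[OF length a b True]
      ideal_length_principal_eq_iff[of a b] ideal_length_principal_eq_iff[of b a] a b by auto
next
  case False
  then have "b \<notin> annih a"
    by (simp add: annih_def mult.commute)
  then show ?thesis
    using False self_in_principal[of b] by blast
qed

end

theorem proposition2p3:
  fixes a b :: "'a::comm_ring_1"
  assumes noeth: "noetherian_ring TYPE('a)"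
    and loc: "local_ring TYPE('a)"
    and m4: "ideal_pow (max_ideal :: 'a set) 4 = {0}"
    and hilb_neg1: "(\<Sum>n<4. (-1::int) ^ n * int (hilb TYPE('a) n)) = 0"
    and a_mem: "a \<in> max_ideal - ideal_pow max_ideal 2"
    and b_mem: "b \<in> max_ideal - ideal_pow max_ideal 2"
  shows "(exact_pair a b \<longleftrightarrow> annih a = range ((*) b)) \<and>
         (annih a = range ((*) b) \<longleftrightarrow>
            (a * b = 0 \<and>
             (*) a ` ideal_pow max_ideal 2 = ideal_pow max_ideal 3 \<and>
             (*) b ` ideal_pow max_ideal 2 = ideal_pow max_ideal 3 \<and>
             int (mu ((*) a ` max_ideal)) = int (mu (max_ideal :: 'a set)) - 1 \<and>
             int (mu ((*) b ` max_ideal)) = int (mu (max_ideal :: 'a set)) - 1))"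
proof -
  interpret artinian_local "TYPE('a)" 4
    using noeth loc m4 by unfold_locales
  let ?h = "hilb TYPE('a)"
  have "ideal_length {0::'a} UNIV = ?h 0 + ?h 1 + ?h 2 + ?h 3"
    using ideal_length_UNIV by (simp add: eval_nat_numeral)
  moreover have "ideal_length {0} (mpow 3) = ?h 3"
    using ideal_length_mpow[of 3] by (simp add: numeral_eq_Suc)
  moreover have "int (?h 0) - int (?h 1) + int (?h 2) - int (?h 3) = 0"
    using hilb_neg1 by (simp add: eval_nat_numeral)
  ultimately have "ideal_length {0::'a} UNIV = 2 * (mu mm + ideal_length {0} (mpow 3))"
    using hilb_0 mu_max_ideal by simp
  moreover have "a \<in> mm - {0}" "b \<in> mm - {0}"
    using a_mem b_mem ideal_0[OF is_ideal_mpow] by auto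
  ultimately show ?thesis
    using exact_pair_iff_annih_eq annih_eq_principal_iff[OF _ a_mem b_mem] by auto
qed

end
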